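(* Let $k\geq1$, $n\geq2k$, and let $\mathcal{S}$ be an antichain in $\mathcal{F}=\mathcal{F}_{2k}^{[1,n]}$ that contains the set $[1,2]\cup[n-2k+3,n]$. Then $B_{\mathcal{S}}$ is $(k-1)$-neighborly w.r.t. $[n]$.
   Context: Notation: $[m,n]=\{m,\dots,n\}$; $2k$-subsets of $[n]$ are identified with increasing vectors, and $\leq_p$ is the componentwise order. $\mathcal{F}_{2k}^{[1,n]}$ is the set of sets $\{i_1,i_1+1,\dots,i_k,i_k+1\}$ with $1\leq i_1$, $i_k\leq n-1$, $i_j\leq i_{j+1}-2$, ordered by $\leq_p$. $\mathcal{F}(\mathcal{S})$ is the order ideal generated by an antichain $\mathcal{S}$, $B(\mathcal{S})$ the pure complex whose facets are the sets of $\mathcal{F}(\mathcal{S})$, $\mathcal{S}-\mathbf{1}_{2k}=\{x-\mathbf{1}_{2k}: x\in\mathcal{S},\min x>1\}$, and $B_{\mathcal{S}}$ is the complex generated by the facets of $B(\mathcal{S})$ that are not facets of $B(\mathcal{S}-\mathbf{1}_{2k})$. A complex is $i$-neighborly w.r.t. $V$ if every subset of $V$ of size at most $i$ is a face. *)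

theory Defs
  imports Main
begin

text \<open>A $2k$-subset of $[n]$ identified with its increasing vector: the componentwise
order compares the $m$-th smallest elements.\<close>
definition leq_p :: "nat set \<Rightarrow> nat set \<Rightarrow> bool" where
  "leq_p x y \<longleftrightarrow> card x = card y \<and>
     (\<forall>m < card x. sorted_list_of_set x ! m \<le> sorted_list_of_set y ! m)"

text \<open>$\mathcal{F}_{2k}^{[1,n]}$: sets $\{i_1,i_1+1,\dots,i_k,i_k+1\}$ with $1\le i_1$,
$i_k\le n-1$, $i_j\le i_{j+1}-2$ (indices shifted to $0,\dots,k-1$).\<close>
definition Fam :: "nat \<Rightarrow> nat \<Rightarrow> nat set set" where
  "Fam k n = {A. \<exists>i :: nat \<Rightarrow> nat.
      1 \<le> i 0 \<and> i (k - 1) + 1 \<le> n \<and>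
      (\<forall>j. j + 1 < k \<longrightarrow> i j + 2 \<le> i (j + 1)) \<and>
      A = (\<Union>j<k. {i j, i j + 1})}"

definition is_antichain :: "nat set set \<Rightarrow> nat set set \<Rightarrow> bool" where
  "is_antichain P S \<longleftrightarrow> S \<subseteq> P \<and> (\<forall>x\<in>S. \<forall>y\<in>S. leq_p x y \<longrightarrow> x = y)"

definition order_ideal :: "nat set set \<Rightarrow> nat set set \<Rightarrow> nat set set" where
  "order_ideal P S = {x \<in> P. \<exists>s\<in>S. leq_p x s}"

definition generated_complex :: "nat set set \<Rightarrow> nat set set" where
  "generated_complex G = {\<sigma>. \<exists>F\<in>G. \<sigma> \<subseteq> F}"

definition facets :: "nat set set \<Rightarrow> nat set set" where
  "facets K = {F \<in> K. \<forall>G\<in>K. F \<subseteq> G \<longrightarrow> G = F}"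

definition B_cpx :: "nat \<Rightarrow> nat \<Rightarrow> nat set set \<Rightarrow> nat set set" where
  "B_cpx k n S = generated_complex (order_ideal (Fam k n) S)"

definition shift_down :: "nat set set \<Rightarrow> nat set set" where
  "shift_down S = {(\<lambda>a. a - 1) ` x | x. x \<in> S \<and> Min x > 1}"

definition B_sub :: "nat \<Rightarrow> nat \<Rightarrow> nat set set \<Rightarrow> nat set set" where
  "B_sub k n S = generated_complex
     {F \<in> facets (B_cpx k n S). F \<notin> facets (B_cpx k n (shift_down S))}"

definition neighborly :: "nat \<Rightarrow> nat set set \<Rightarrow> nat set \<Rightarrow> bool" where
  "neighborly i K V \<longleftrightarrow> (\<forall>\<sigma>. \<sigma> \<subseteq> V \<and> card \<sigma> \<le> i \<longrightarrow> \<sigma> \<in> K)"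

end

(* Cover \<sigma> by a member F of \<F> containing [1,2]; F lies below the given element of \<S>.
   If F is also below some s - 1 with s \<in> \<S>, pick a pair of F disjoint from \<sigma> (there is one
   since |\<sigma>| < k) and move it, together with the maximal run of adjacent pairs following it,
   one step to the right.  The new set still contains \<sigma>, is still below s, and has a larger
   coordinate sum, so the process ends at a facet of B(\<S>) that is not one of B(\<S> - 1). *)
theory Submission
  imports Defs
begin

definition pair_union :: "nat \<Rightarrow> (nat \<Rightarrow> nat) \<Rightarrow> nat set" where
  "pair_union k i = (\<Union>j<k. {i j, i j + 1})"

definition spaced :: "nat \<Rightarrow> (nat \<Rightarrow> nat) \<Rightarrow> bool" where
  "spaced k i \<longleftrightarrow> (\<forall>j. j + 1 < k \<longrightarrow> i j + 2 \<le> i (j + 1))"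

lemma Fam_eq: "Fam k n = {pair_union k i | i. 1 \<le> i 0 \<and> i (k - 1) + 1 \<le> n \<and> spaced k i}"
  unfolding Fam_def pair_union_def spaced_def by blast

lemma spaced_gap:
  assumes "spaced k i" "j \<le> j'" "j' < k"
  shows "i j + 2 * (j' - j) \<le> i j'"
  using assms(2,3)
proof (induction j')
  case (Suc j')
  show ?case
  proof (cases "j = Suc j'")
    case False
    then have "i j + 2 * (j' - j) \<le> i j'" using Suc by simp
    moreover have "i j' + 2 \<le> i (Suc j')" using assms(1) Suc.prems unfolding spaced_def by auto
    ultimately show ?thesis using False Suc.prems by (simp add: Suc_diff_le)
  qed simp
qed simp

lemma spaced_case_nat:
  assumes "spaced k c" "0 < k \<Longrightarrow> x + 2 \<le> c 0"
  shows "spaced (Suc k) (case_nat x c)"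
  using assms unfolding spaced_def by (auto split: nat.split)

lemma pair_union_case_nat: "pair_union (Suc k) (case_nat x c) = {x, x + 1} \<union> pair_union k c"
  unfolding pair_union_def by (auto simp: lessThan_Suc_eq_insert_0)

lemma pair_union_arith: "pair_union m (\<lambda>j. c + 2 * j) = {c..<c + 2 * m}"
  by (induction m) (auto simp: pair_union_def lessThan_Suc)

lemma finite_pair_union: "finite (pair_union k i)"
  unfolding pair_union_def by simp

subsection \<open>The increasing vector of a union of pairs\<close>

definition pair_list :: "nat \<Rightarrow> (nat \<Rightarrow> nat) \<Rightarrow> nat list" where
  "pair_list k i = map (\<lambda>m. i (m div 2) + m mod 2) [0..<2 * k]"

lemma set_pair_list: "set (pair_list k i) = pair_union k i"
proof -
  have "x \<in> (\<lambda>m. i (m div 2) + m mod 2) ` {0..<2 * k}" if "j < k" "x = i j \<or> x = i j + 1" for x j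
    using that by (auto intro: image_eqI[of _ _ "2 * j"] image_eqI[of _ _ "2 * j + 1"])
  moreover have "i (m div 2) + m mod 2 \<in> pair_union k i" if "m < 2 * k" for m
    using that mod2_eq_if[of m] by (auto simp: pair_union_def less_mult_imp_div_less)
  ultimately show ?thesis
    unfolding pair_list_def pair_union_def by auto
qed

lemma sorted_wrt_pair_list:
  assumes "spaced k i"
  shows "sorted_wrt (<) (pair_list k i)"
proof -
  have "i (a div 2) + a mod 2 < i (b div 2) + b mod 2" if "a < b" "b < 2 * k" for a b
  proof (cases "a div 2 = b div 2")
    case True
    then have "a mod 2 < b mod 2"
      using div_mult_mod_eq[of a 2] div_mult_mod_eq[of b 2] \<open>a < b\<close> by linarith
    then show ?thesis using True by simp
  next
    case False
    then have "a div 2 < b div 2" using \<open>a < b\<close> by (simp add: div_le_mono order_less_le)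
    moreover have "b div 2 < k" using \<open>b < 2 * k\<close> by auto
    ultimately have "i (a div 2) + 2 * (b div 2 - a div 2) \<le> i (b div 2)"
      using spaced_gap[OF assms] by simp
    then show ?thesis using \<open>a div 2 < b div 2\<close> by linarith
  qed
  then show ?thesis unfolding sorted_wrt_iff_nth_less pair_list_def by auto
qed

lemma sorted_list_of_set_pair_union:
  assumes "spaced k i"
  shows "sorted_list_of_set (pair_union k i) = pair_list k i"
  using sorted_wrt_pair_list[OF assms]
  unfolding set_pair_list[symmetric] sorted_list_of_set_sort_remdups
  by (simp add: strict_sorted_iff distinct_remdups_id sorted_sort_id)

lemma card_pair_union:
  assumes "spaced k i"
  shows "card (pair_union k i) = 2 * k"
  using distinct_card[of "pair_list k i"] sorted_wrt_pair_list[OF assms]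
  unfolding set_pair_list[symmetric] by (simp add: strict_sorted_iff pair_list_def)

lemma leq_p_pair_union_iff:
  assumes "spaced k i" "spaced k t"
  shows "leq_p (pair_union k i) (pair_union k t) \<longleftrightarrow> (\<forall>j<k. i j \<le> t j)"
proof -
  have "leq_p (pair_union k i) (pair_union k t)
      \<longleftrightarrow> (\<forall>m<2 * k. i (m div 2) + m mod 2 \<le> t (m div 2) + m mod 2)"
    unfolding leq_p_def card_pair_union[OF assms(1)] card_pair_union[OF assms(2)]
      sorted_list_of_set_pair_union[OF assms(1)] sorted_list_of_set_pair_union[OF assms(2)]
    by (simp add: pair_list_def)
  also have "\<dots> \<longleftrightarrow> (\<forall>j<k. i j \<le> t j)"
  proof (intro iffI allI impI)
    fix j assume "\<forall>m<2 * k. i (m div 2) + m mod 2 \<le> t (m div 2) + m mod 2" "j < k"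
    then show "i j \<le> t j" by (auto dest: spec[of _ "2 * j"])
  qed (simp add: less_mult_imp_div_less)
  finally show ?thesis .
qed

lemma facets_generated_complex_equicard:
  assumes "\<forall>F\<in>G. finite F \<and> card F = c"
  shows "facets (generated_complex G) = G"
proof
  show "facets (generated_complex G) \<subseteq> G"
    unfolding facets_def generated_complex_def by blast
  show "G \<subseteq> facets (generated_complex G)"
  proof
    fix F assume "F \<in> G"
    have "H = F" if "H' \<in> G" "F \<subseteq> H" "H \<subseteq> H'" for H H'
      using card_subset_eq[of H' F] assms \<open>F \<in> G\<close> that by auto
    then show "F \<in> facets (generated_complex G)"
      using \<open>F \<in> G\<close> unfolding facets_def generated_complex_def by blast
  qed
qed

lemma facets_B_cpx: "facets (B_cpx k n S) = order_ideal (Fam k n) S"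
  unfolding B_cpx_def
  by (rule facets_generated_complex_equicard[where c = "2 * k"])
    (auto simp: order_ideal_def Fam_eq card_pair_union finite_pair_union)

subsection \<open>Covering a small set by pairs\<close>

lemma ex_spaced_cover:
  "\<sigma> \<subseteq> {a..n} \<Longrightarrow> card \<sigma> \<le> k \<Longrightarrow> a + 2 * k \<le> n + 1 \<Longrightarrow>
   \<exists>i. spaced k i \<and> (\<forall>j<k. a \<le> i j \<and> i j + 1 \<le> n) \<and> \<sigma> \<subseteq> pair_union k i"
proof (induction k arbitrary: a \<sigma>)
  case 0
  then have "\<sigma> = {}" using finite_subset by fastforce
  then show ?case by (auto simp: spaced_def)
next
  case (Suc k)
  show ?case
  proof (cases "\<sigma> \<subseteq> {n - 2 * k - 1..n}")
    case True
    have "pair_union (Suc k) (\<lambda>j. n - 2 * k - 1 + 2 * j) = {n - 2 * k - 1..n}"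
      unfolding pair_union_arith using Suc.prems(3) by auto
    then show ?thesis using True Suc.prems(3)
      by (intro exI[of _ "\<lambda>j. n - 2 * k - 1 + 2 * j"]) (auto simp: spaced_def)
  next
    case False
    have fin: "finite \<sigma>" using Suc.prems(1) finite_subset by blast
    define x where "x = Min \<sigma>"
    have "\<sigma> \<noteq> {}" using False by auto
    then have x: "x \<in> \<sigma>" "\<forall>z\<in>\<sigma>. x \<le> z" using fin by (auto simp: x_def)
    have "x < n - 2 * k - 1" using False Suc.prems(1) x by fastforce
    define \<sigma>' where "\<sigma>' = \<sigma> - {x, x + 1}"
    have "\<sigma>' \<subseteq> {x + 2..n}" using x Suc.prems(1) by (fastforce simp: \<sigma>'_def)
    moreover have "card \<sigma>' \<le> k"
    proof -
      have "card \<sigma>' \<le> card (\<sigma> - {x})" unfolding \<sigma>'_def using fin by (intro card_mono) auto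
      then show ?thesis using x(1) fin Suc.prems(2) by simp
    qed
    moreover have "x + 2 + 2 * k \<le> n + 1" using \<open>x < n - 2 * k - 1\<close> by linarith
    ultimately obtain c where c: "spaced k c" "\<forall>j<k. x + 2 \<le> c j \<and> c j + 1 \<le> n"
      "\<sigma>' \<subseteq> pair_union k c"
      using Suc.IH by blast
    have "spaced (Suc k) (case_nat x c)" using c by (intro spaced_case_nat) auto
    moreover have "\<forall>j<Suc k. a \<le> case_nat x c j \<and> case_nat x c j + 1 \<le> n"
      using c(2) x Suc.prems \<open>x + 2 + 2 * k \<le> n + 1\<close>
      by (fastforce split: nat.split)
    moreover have "\<sigma> \<subseteq> pair_union (Suc k) (case_nat x c)"
      using c(3) by (auto simp: pair_union_case_nat \<sigma>'_def)
    ultimately show ?thesis by blast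
  qed
qed

lemma ex_pair_disjoint:
  assumes "spaced k i" "finite \<sigma>" "card \<sigma> < k"
  shows "\<exists>j<k. i j \<notin> \<sigma> \<and> i j + 1 \<notin> \<sigma>"
proof (rule ccontr)
  assume none_free: "\<not> ?thesis"
  define f where "f j = (if i j \<in> \<sigma> then i j else i j + 1)" for j
  have f: "\<forall>j<k. f j \<in> \<sigma>"
    using none_free by (auto simp: f_def)
  have "f j < f j'" if "j < j'" "j' < k" for j j'
  proof -
    have "i j + 2 \<le> i j'" using spaced_gap[OF assms(1), of j j'] that by simp
    then show ?thesis by (simp add: f_def)
  qed
  then have "inj_on f {..<k}"
    by (metis inj_onI lessThan_iff linorder_neqE_nat less_irrefl)
  moreover have "f ` {..<k} \<subseteq> \<sigma>" using f by auto
  ultimately have "card {..<k} \<le> card \<sigma>" using card_inj_on_le assms(2) by blast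
  then show False using assms(3) by simp
qed

subsection \<open>Pushing pairs to the right\<close>

lemma shift_block_up:
  assumes "spaced k i" "i j0 \<notin> \<sigma>" "i j0 + 1 \<notin> \<sigma>" "\<sigma> \<subseteq> pair_union k i"
  obtains i' where "spaced k i'" "\<forall>j. i j \<le> i' j \<and> i' j \<le> i j + 1" "i' j0 = i j0 + 1"
    "\<sigma> \<subseteq> pair_union k i'"
proof
  define block where "block j \<longleftrightarrow> j0 \<le> j \<and> (\<forall>m. j0 \<le> m \<and> m < j \<longrightarrow> i (m + 1) = i m + 2)" for j
  define i' where "i' j = (if block j then i j + 1 else i j)" for j
  have block_Suc: "block (j + 1) \<longleftrightarrow> block j \<and> i (j + 1) = i j + 2" if "block j" for j
    using that unfolding block_def by (auto simp: less_Suc_eq)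
  show "spaced k i'"
    unfolding spaced_def
  proof (intro allI impI)
    fix j assume j: "j + 1 < k"
    have "i j + 2 \<le> i (j + 1)" using assms(1) j unfolding spaced_def by blast
    then show "i' j + 2 \<le> i' (j + 1)"
      using block_Suc[of j] by (auto simp: i'_def)
  qed
  show "\<forall>j. i j \<le> i' j \<and> i' j \<le> i j + 1" by (simp add: i'_def)
  show "i' j0 = i j0 + 1" by (simp add: i'_def block_def)
  show "\<sigma> \<subseteq> pair_union k i'"
  proof
    fix x assume "x \<in> \<sigma>"
    then obtain j where j: "j < k" "x = i j \<or> x = i j + 1"
      using assms(4) unfolding pair_union_def by auto
    show "x \<in> pair_union k i'"
    proof (cases "block j \<and> x = i j")
      case True
      \<comment> \<open>the pair before j was shifted onto i j\<close>
      then have "j0 < j" using \<open>x \<in> \<sigma>\<close> assms(2) by (auto simp: block_def le_less)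
      define m where "m = j - 1"
      have "j = m + 1" using \<open>j0 < j\<close> by (simp add: m_def)
      then have "block m" "i j = i m + 2"
        using \<open>j0 < j\<close> True unfolding block_def by auto
      moreover have "m < k" using \<open>j = m + 1\<close> j(1) by simp
      ultimately show ?thesis
        using True unfolding pair_union_def i'_def by (auto intro!: bexI[of _ m])
    next
      case False
      then show ?thesis using j by (auto simp: pair_union_def i'_def)
    qed
  qed
qed

lemma shift_down_successor:
  assumes "S \<subseteq> Fam k n" "spaced k i" "s' \<in> shift_down S" "leq_p (pair_union k i) s'"
  obtains t where "pair_union k t \<in> S" "spaced k t" "\<forall>j<k. i j + 1 \<le> t j \<and> t j + 1 \<le> n"
proof -
  obtain t where t: "pair_union k t \<in> S" "Min (pair_union k t) > 1"
    "s' = (\<lambda>a. a - 1) ` pair_union k t" "1 \<le> t 0" "t (k - 1) + 1 \<le> n" "spaced k t"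
    using assms(1,3) unfolding shift_down_def Fam_eq by blast
  have t_bounds: "2 \<le> t j \<and> t j + 1 \<le> n" if "j < k" for j
  proof -
    have "t 0 \<in> pair_union k t" using that by (auto simp: pair_union_def)
    then have "Min (pair_union k t) \<le> t 0" by (simp add: finite_pair_union)
    then have "2 \<le> t 0" using t(2) by linarith
    then show ?thesis
      using spaced_gap[OF t(6), of 0 j] spaced_gap[OF t(6), of j "k - 1"] t(5) that by fastforce
  qed
  have "(\<lambda>a. a - 1) ` pair_union k t = pair_union k (\<lambda>j. t j - 1)"
    using t_bounds unfolding pair_union_def by force
  moreover have "spaced k (\<lambda>j. t j - 1)"
    unfolding spaced_def
  proof (intro allI impI)
    fix j assume "j + 1 < k"
    then have "t j + 2 \<le> t (j + 1)" "2 \<le> t j" using t(6) t_bounds unfolding spaced_def by auto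
    then show "t j - 1 + 2 \<le> t (j + 1) - 1" by linarith
  qed
  ultimately have "\<forall>j<k. i j \<le> t j - 1"
    using leq_p_pair_union_iff[OF assms(2)] assms(4) t(3) by auto
  then show ?thesis using that t(1,6) t_bounds by fastforce
qed

lemma ex_facet_escaping_shift:
  assumes "S \<subseteq> Fam k n" "finite \<sigma>" "card \<sigma> < k"
  shows "spaced k i \<Longrightarrow> 1 \<le> i 0 \<Longrightarrow> i (k - 1) + 1 \<le> n \<Longrightarrow> \<sigma> \<subseteq> pair_union k i \<Longrightarrow>
    \<exists>s\<in>S. leq_p (pair_union k i) s \<Longrightarrow>
    \<exists>F\<in>order_ideal (Fam k n) S. F \<notin> order_ideal (Fam k n) (shift_down S) \<and> \<sigma> \<subseteq> F"
proof (induction "k * n - (\<Sum>j<k. i j)" arbitrary: i rule: less_induct)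
  case less
  have "pair_union k i \<in> order_ideal (Fam k n) S"
    using less.prems by (auto simp: order_ideal_def Fam_eq)
  show ?case
  proof (cases "pair_union k i \<in> order_ideal (Fam k n) (shift_down S)")
    case False
    then show ?thesis using \<open>pair_union k i \<in> order_ideal (Fam k n) S\<close> less.prems by blast
  next
    case True
    then obtain t where t: "pair_union k t \<in> S" "spaced k t" "\<forall>j<k. i j + 1 \<le> t j \<and> t j + 1 \<le> n"
      using shift_down_successor[OF assms(1) less.prems(1)] unfolding order_ideal_def by blast
    obtain j0 where j0: "j0 < k" "i j0 \<notin> \<sigma>" "i j0 + 1 \<notin> \<sigma>"
      using ex_pair_disjoint[OF less.prems(1) assms(2,3)] by blast
    obtain i' where i': "spaced k i'" "\<forall>j. i j \<le> i' j \<and> i' j \<le> i j + 1" "i' j0 = i j0 + 1"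
      "\<sigma> \<subseteq> pair_union k i'"
      using shift_block_up[OF less.prems(1) j0(2,3) less.prems(4)] by blast
    have i'_t: "\<forall>j<k. i' j \<le> t j \<and> t j + 1 \<le> n" using i'(2) t(3) by (meson le_trans)
    show ?thesis
    proof (rule less.hyps[OF _ i'(1) _ _ i'(4)])
      have "(\<Sum>j<k. i j) < (\<Sum>j<k. i' j)"
        using i'(2,3) j0(1) by (intro sum_strict_mono_ex1) (auto intro!: bexI[of _ j0])
      moreover have "(\<Sum>j<k. i' j) \<le> k * n"
        using sum_bounded_above[of "{..<k}" i' n] i'_t by fastforce
      ultimately show "k * n - (\<Sum>j<k. i' j) < k * n - (\<Sum>j<k. i j)" by linarith
      show "1 \<le> i' 0" using less.prems(2) i'(2) le_trans by blast
      show "i' (k - 1) + 1 \<le> n" using i'_t[rule_format, of "k - 1"] j0(1) by simp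
      show "\<exists>s\<in>S. leq_p (pair_union k i') s"
        using leq_p_pair_union_iff[OF i'(1) t(2)] i'_t t(1) by blast
    qed
  qed
qed

lemma pair_union_top:
  assumes "k = Suc k'" "2 * k \<le> n"
  shows "pair_union k (case_nat 1 (\<lambda>j. n - 2 * k + 3 + 2 * j)) = {1..2} \<union> {n - 2 * k + 3..n}"
proof -
  have "n - 2 * k + 3 + 2 * k' = Suc n" using assms by simp
  then have "pair_union k' (\<lambda>j. n - 2 * k + 3 + 2 * j) = {n - 2 * k + 3..n}"
    by (simp only: pair_union_arith atLeastLessThanSuc_atLeastAtMost)
  moreover have "{1..2} = {1, 1 + 1 :: nat}" by auto
  ultimately show ?thesis by (simp only: assms(1) pair_union_case_nat)
qed

lemma leq_p_top:
  assumes "spaced k i" "i 0 \<le> 1" "i (k - 1) + 1 \<le> n" "2 * k \<le> n" "0 < k"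
  shows "leq_p (pair_union k i) ({1..2} \<union> {n - 2 * k + 3..n})"
proof -
  obtain k' where k': "k = Suc k'" using assms(5) by (cases k) auto
  define t where "t = case_nat (1::nat) (\<lambda>j. n - 2 * k + 3 + 2 * j)"
  have "spaced k t" unfolding t_def k' by (intro spaced_case_nat) (auto simp: spaced_def)
  moreover have "i j \<le> t j" if "j < k" for j
  proof (cases j)
    case (Suc m)
    have "i j + 2 * (k - 1 - j) \<le> i (k - 1)" using spaced_gap[OF assms(1), of j "k - 1"] that by simp
    moreover have "t j = n - 2 * k + 3 + 2 * m" by (simp add: t_def Suc)
    ultimately show ?thesis using assms(3,4) that Suc by linarith
  qed (use assms(2) in \<open>simp add: t_def\<close>)
  moreover have "pair_union k t = {1..2} \<union> {n - 2 * k + 3..n}"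
    unfolding t_def by (rule pair_union_top[OF k' assms(4)])
  ultimately show ?thesis using leq_p_pair_union_iff[OF assms(1), of t] by simp
qed

lemma ex_spaced_cover_from_1:
  assumes "\<sigma> \<subseteq> {1..n}" "card \<sigma> < k" "2 * k \<le> n"
  obtains i where "spaced k i" "i 0 = 1" "i (k - 1) + 1 \<le> n" "\<sigma> \<subseteq> pair_union k i"
proof -
  obtain k' where k': "k = Suc k'" using assms(2) by (cases k) auto
  have "finite \<sigma>" using assms(1) finite_subset by blast
  then have "card (\<sigma> - {1, 2}) \<le> card \<sigma>" by (intro card_mono) auto
  then have "card (\<sigma> - {1, 2}) \<le> k'" using assms(2) k' by simp
  moreover have "\<sigma> - {1, 2} \<subseteq> {3..n}" using assms(1) by auto
  ultimately obtain c where c: "spaced k' c" "\<forall>j<k'. 3 \<le> c j \<and> c j + 1 \<le> n"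
    "\<sigma> - {1, 2} \<subseteq> pair_union k' c"
    using ex_spaced_cover[of "\<sigma> - {1, 2}" 3 n k'] assms(3) k' by auto
  show ?thesis
  proof (rule that[of "case_nat 1 c"])
    show "spaced k (case_nat 1 c)" unfolding k' using c(1,2) by (intro spaced_case_nat) auto
    show "case_nat 1 c (k - 1) + 1 \<le> n" using c(2) assms(3) k' by (cases k') simp_all
    show "\<sigma> \<subseteq> pair_union k (case_nat 1 c)" using c(3) by (auto simp: k' pair_union_case_nat)
  qed simp
qed

theorem lemma3p14:
  fixes k n :: nat and S :: "nat set set"
  assumes "k \<ge> 1" and "n \<ge> 2 * k"
    and "is_antichain (Fam k n) S"
    and "{1..2} \<union> {n - 2 * k + 3..n} \<in> S"
  shows "neighborly (k - 1) (B_sub k n S) {1..n}"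
  unfolding neighborly_def
proof (intro allI impI)
  fix \<sigma> :: "nat set" assume \<sigma>: "\<sigma> \<subseteq> {1..n} \<and> card \<sigma> \<le> k - 1"
  have "finite \<sigma>" using \<sigma> finite_subset by blast
  have "card \<sigma> < k" using \<sigma> assms(1) by linarith
  obtain i where i: "spaced k i" "i 0 = 1" "i (k - 1) + 1 \<le> n" "\<sigma> \<subseteq> pair_union k i"
    using ex_spaced_cover_from_1[of \<sigma> n k] \<sigma> \<open>card \<sigma> < k\<close> assms(2) by blast
  have "leq_p (pair_union k i) ({1..2} \<union> {n - 2 * k + 3..n})"
    using leq_p_top[OF i(1) _ i(3) assms(2)] i(2) assms(1) by simp
  then have below: "\<exists>s\<in>S. leq_p (pair_union k i) s" using assms(4) by blast
  have "S \<subseteq> Fam k n" using assms(3) unfolding is_antichain_def by simp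
  then obtain F where "F \<in> order_ideal (Fam k n) S"
    "F \<notin> order_ideal (Fam k n) (shift_down S)" "\<sigma> \<subseteq> F"
    using ex_facet_escaping_shift[OF _ \<open>finite \<sigma>\<close> \<open>card \<sigma> < k\<close> i(1) _ i(3,4) below] i(2)
    by auto
  then show "\<sigma> \<in> B_sub k n S"
    unfolding B_sub_def facets_B_cpx generated_complex_def by blast
qed

end
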